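(* Let $X$ be a Fréchet space and let $\Gamma:[0,1]\to ck(X)$ be Pettis integrable in $ck(X)$. Then every scalarly measurable selection of $\Gamma$ is Pettis integrable.
   Context: $X$ is a Fréchet space, $X^*$ its dual, $ck(X)$ the nonempty compact convex subsets, $\sigma(x^*,C)=\sup_{x\in C}\langle x^*,x\rangle$. Pettis integrable in $ck(X)$ (for a multifunction): $\sigma(x^*,\Gamma(\cdot))$ is Lebesgue integrable for each $x^*\in X^*$ and for each Lebesgue measurable $E\subseteq[0,1]$ there is $x_E\in ck(X)$ with $\sigma(x^*,x_E)=\int_E\sigma(x^*,\Gamma(t))dt$ for all $x^*$. A selection of $\Gamma$ is a function $f:[0,1]\to X$ with $f(t)\in\Gamma(t)$ for a.e. $t$; it is scalarly measurable if $t\mapsto\langle x^*,f(t)\rangle$ is measurable for each $x^*$; a function $f$ is Pettis integrable if $\langle x^*,f(\cdot)\rangle$ is Lebesgue integrable for each $x^*$ and for each measurable $E$ there is $x_E\in X$ with $\langle x^*,x_E\rangle=\int_E\langle x^*,f(t)\rangle dt$ for all $x^*$. *)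

theory Defs
  imports "HOL-Analysis.Analysis" "HOL-Probability.Probability"
begin

text \<open>A Frechet space is modelled as a real vector space together with a countable
separating family of seminorms p 0, p 1, ... , complete w.r.t. the induced
(metrizable, locally convex) topology.\<close>

definition seminorm :: "('a::real_vector \<Rightarrow> real) \<Rightarrow> bool" where
  "seminorm q \<longleftrightarrow> (\<forall>x y. q (x + y) \<le> q x + q y) \<and> (\<forall>c x. q (c *\<^sub>R x) = \<bar>c\<bar> * q x)"

definition frechet_seminorms :: "(nat \<Rightarrow> 'a::real_vector \<Rightarrow> real) \<Rightarrow> bool" where
  "frechet_seminorms p \<longleftrightarrow>
     (\<forall>n. seminorm (p n)) \<and>
     (\<forall>x. (\<forall>n. p n x = 0) \<longrightarrow> x = 0) \<and>
     (\<forall>s. (\<forall>n e. 0 < e \<longrightarrow> (\<exists>N. \<forall>i\<ge>N. \<forall>j\<ge>N. p n (s i - s j) < e)) \<longrightarrow>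
          (\<exists>l. \<forall>n. (\<lambda>i. p n (s i - l)) \<longlonglongrightarrow> 0))"

definition frechet_topology :: "(nat \<Rightarrow> 'a::real_vector \<Rightarrow> real) \<Rightarrow> 'a topology" where
  "frechet_topology p = topology (\<lambda>U. \<forall>x\<in>U. \<exists>n e. 0 < e \<and> {y. \<forall>k\<le>n. p k (y - x) < e} \<subseteq> U)"

definition dual_space :: "(nat \<Rightarrow> 'a::real_vector \<Rightarrow> real) \<Rightarrow> ('a \<Rightarrow> real) set" where
  "dual_space p = {f. linear f \<and> continuous_map (frechet_topology p) euclideanreal f}"

definition ck :: "(nat \<Rightarrow> 'a::real_vector \<Rightarrow> real) \<Rightarrow> 'a set set" where
  "ck p = {C. C \<noteq> {} \<and> compactin (frechet_topology p) C \<and> convex C}"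

definition support_fun :: "('a \<Rightarrow> real) \<Rightarrow> 'a set \<Rightarrow> real" where
  "support_fun xs C = (SUP x\<in>C. xs x)"

definition pettis_integrable_ck ::
  "(nat \<Rightarrow> 'a::real_vector \<Rightarrow> real) \<Rightarrow> (real \<Rightarrow> 'a set) \<Rightarrow> bool" where
  "pettis_integrable_ck p \<Gamma> \<longleftrightarrow>
     (\<forall>xs\<in>dual_space p. integrable (lebesgue_on {0..1}) (\<lambda>t. support_fun xs (\<Gamma> t))) \<and>
     (\<forall>E\<in>sets (lebesgue_on {0..1}). \<exists>C\<in>ck p. \<forall>xs\<in>dual_space p.
         support_fun xs C = (LINT t:E|lebesgue_on {0..1}. support_fun xs (\<Gamma> t)))"

definition pettis_integrable ::
  "(nat \<Rightarrow> 'a::real_vector \<Rightarrow> real) \<Rightarrow> (real \<Rightarrow> 'a) \<Rightarrow> bool" where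
  "pettis_integrable p f \<longleftrightarrow>
     (\<forall>xs\<in>dual_space p. integrable (lebesgue_on {0..1}) (\<lambda>t. xs (f t))) \<and>
     (\<forall>E\<in>sets (lebesgue_on {0..1}). \<exists>x. \<forall>xs\<in>dual_space p.
         xs x = (LINT t:E|lebesgue_on {0..1}. xs (f t)))"

definition scalarly_measurable ::
  "(nat \<Rightarrow> 'a::real_vector \<Rightarrow> real) \<Rightarrow> (real \<Rightarrow> 'a) \<Rightarrow> bool" where
  "scalarly_measurable p f \<longleftrightarrow>
     (\<forall>xs\<in>dual_space p. (\<lambda>t. xs (f t)) \<in> borel_measurable (lebesgue_on {0..1}))"

definition is_selection :: "(real \<Rightarrow> 'a set) \<Rightarrow> (real \<Rightarrow> 'a) \<Rightarrow> bool" where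
  "is_selection \<Gamma> f \<longleftrightarrow> (AE t in lebesgue_on {0..1}. f t \<in> \<Gamma> t)"

end

theory Submission imports Defs begin

text \<open>Fix a measurable E and let C \<in> ck(X) be the Pettis integral of \<Gamma> over E. The functional
\<phi>(x*) = \<integral>_E x*(f) is linear on X* and, because f is a selection, \<phi>(x*) \<le> \<integral>_E \<sigma>(x*, \<Gamma>) = \<sigma>(x*, C).
Such a functional is evaluation at a point of C. For finitely many x*_1, ..., x*_n, take x0 \<in> C
minimising \<Sum>_i (x*_i(x) - \<phi>(x*_i))^2; the first-order condition on the convex set C says that x0
maximises d = - \<Sum>_i (x*_i(x0) - \<phi>(x*_i)) x*_i over C, and then \<phi>(d) \<le> \<sigma>(d, C) = d(x0) forces
every residual to vanish. The finite intersection property of the compact set C passes from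
finitely many functionals to all of X*.\<close>

lemma sum_squares_le_perturbed_imp_sum_mult_nonneg:
  fixes a b :: "'i \<Rightarrow> real"
  assumes "finite F"
    and le: "\<And>t. 0 < t \<Longrightarrow> t \<le> 1 \<Longrightarrow> (\<Sum>i\<in>F. (a i)\<^sup>2) \<le> (\<Sum>i\<in>F. (a i + t * b i)\<^sup>2)"
  shows "0 \<le> (\<Sum>i\<in>F. a i * b i)"
proof (rule ccontr)
  define B where "B = (\<Sum>i\<in>F. a i * b i)"
  define C where "C = (\<Sum>i\<in>F. (b i)\<^sup>2)"
  assume "\<not> 0 \<le> (\<Sum>i\<in>F. a i * b i)"
  hence B: "B < 0" by (simp add: B_def)
  have C: "0 \<le> C" unfolding C_def by (intro sum_nonneg) auto
  have expand: "(\<Sum>i\<in>F. (a i + t * b i)\<^sup>2) = (\<Sum>i\<in>F. (a i)\<^sup>2) + 2 * t * B + t\<^sup>2 * C" for t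
    unfolding B_def C_def
    by (simp add: power2_eq_square algebra_simps sum.distrib sum_distrib_left)
  define t where "t = min 1 (- B / (C + 1))"
  have t_pos: "0 < t" using B C by (simp add: t_def divide_neg_pos)
  have t_le_1: "t \<le> 1" by (simp add: t_def)
  have "t * C \<le> - B / (C + 1) * C" using C by (intro mult_right_mono) (auto simp: t_def)
  also have "\<dots> < - B" using B C by (simp add: field_simps)
  finally have tC: "t * C < - B" .
  have "0 \<le> 2 * t * B + t\<^sup>2 * C" using le[OF t_pos t_le_1] expand[of t] by simp
  also have "\<dots> = t * (2 * B + t * C)" by (simp add: power2_eq_square algebra_simps)
  finally have "0 \<le> 2 * B + t * C" using t_pos by (simp add: zero_le_mult_iff)
  thus False using tC B by linarith
qed

lemma convex_argmin_sum_squares_variational_ineq: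
  fixes K :: "'a::real_vector set" and c :: "('a \<Rightarrow> real) \<Rightarrow> real"
  assumes "convex K" "finite F" and lin: "\<And>d. d \<in> F \<Longrightarrow> linear d"
    and "x\<^sub>0 \<in> K"
    and argmin: "\<And>x. x \<in> K \<Longrightarrow> (\<Sum>d\<in>F. (d x\<^sub>0 - c d)\<^sup>2) \<le> (\<Sum>d\<in>F. (d x - c d)\<^sup>2)"
    and "x \<in> K"
  shows "0 \<le> (\<Sum>d\<in>F. (d x\<^sub>0 - c d) * (d x - d x\<^sub>0))"
proof (rule sum_squares_le_perturbed_imp_sum_mult_nonneg[OF \<open>finite F\<close>])
  fix t :: real assume t: "0 < t" "t \<le> 1"
  define x\<^sub>t where "x\<^sub>t = (1 - t) *\<^sub>R x\<^sub>0 + t *\<^sub>R x"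
  have "x\<^sub>t \<in> K" unfolding x\<^sub>t_def using assms t by (intro convexD) auto
  moreover have "(\<Sum>d\<in>F. (d x\<^sub>t - c d)\<^sup>2) = (\<Sum>d\<in>F. (d x\<^sub>0 - c d + t * (d x - d x\<^sub>0))\<^sup>2)"
  proof (rule sum.cong[OF refl])
    fix d assume "d \<in> F"
    hence "d x\<^sub>t = (1 - t) * d x\<^sub>0 + t * d x"
      using lin by (simp add: x\<^sub>t_def linear_add linear_scale)
    hence "d x\<^sub>t - c d = d x\<^sub>0 - c d + t * (d x - d x\<^sub>0)" by (simp add: algebra_simps)
    thus "(d x\<^sub>t - c d)\<^sup>2 = (d x\<^sub>0 - c d + t * (d x - d x\<^sub>0))\<^sup>2" by (rule arg_cong)
  qed
  ultimately show "(\<Sum>d\<in>F. (d x\<^sub>0 - c d)\<^sup>2) \<le> (\<Sum>d\<in>F. (d x\<^sub>0 - c d + t * (d x - d x\<^sub>0))\<^sup>2)"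
    using argmin[of x\<^sub>t] by simp
qed

locale dominated_moment_problem =
  fixes T :: "'a::real_vector topology" and K :: "'a set"
    and D :: "('a \<Rightarrow> real) set" and \<phi> :: "('a \<Rightarrow> real) \<Rightarrow> real"
  assumes compactin_K: "compactin T K" and K_nonempty: "K \<noteq> {}" and convex_K: "convex K"
    and linear_D: "\<And>d. d \<in> D \<Longrightarrow> linear d"
    and continuous_D: "\<And>d. d \<in> D \<Longrightarrow> continuous_map T euclideanreal d"
    and lincomb_in_D: "\<And>l G. finite G \<Longrightarrow> G \<subseteq> D \<Longrightarrow> (\<lambda>x. \<Sum>d\<in>G. l d * d x) \<in> D"
    and \<phi>_lincomb: "\<And>l G. finite G \<Longrightarrow> G \<subseteq> D \<Longrightarrow> \<phi> (\<lambda>x. \<Sum>d\<in>G. l d * d x) = (\<Sum>d\<in>G. l d * \<phi> d)"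
    and \<phi>_le_Sup: "\<And>d. d \<in> D \<Longrightarrow> \<phi> d \<le> Sup (d ` K)"
begin

lemma finite_solution:
  assumes F: "finite F" "F \<subseteq> D"
  shows "\<exists>x\<in>K. \<forall>d\<in>F. d x = \<phi> d"
proof -
  define residual where "residual x d = d x - \<phi> d" for x d
  define g where "g x = (\<Sum>d\<in>F. (residual x d)\<^sup>2)" for x
  have g_continuous: "continuous_map T euclideanreal g"
    unfolding g_def residual_def using F continuous_D
    by (intro continuous_map_sum) (auto simp: power2_eq_square intro!: continuous_map_real_mult continuous_map_diff)
  hence "compact (g ` K)" using image_compactin[OF compactin_K g_continuous] by simp
  then obtain x\<^sub>0 where x\<^sub>0: "x\<^sub>0 \<in> K" and argmin: "\<And>x. x \<in> K \<Longrightarrow> g x\<^sub>0 \<le> g x"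
    using compact_attains_inf[of "g ` K"] K_nonempty by auto
  define d\<^sub>0 where "d\<^sub>0 x = (\<Sum>d\<in>F. (- residual x\<^sub>0 d) * d x)" for x
  have d\<^sub>0_in_D: "d\<^sub>0 \<in> D" unfolding d\<^sub>0_def by (rule lincomb_in_D[OF F])
  have "d\<^sub>0 x \<le> d\<^sub>0 x\<^sub>0" if "x \<in> K" for x
  proof -
    have "d\<^sub>0 x - d\<^sub>0 x\<^sub>0 = - (\<Sum>d\<in>F. residual x\<^sub>0 d * (d x - d x\<^sub>0))"
      unfolding d\<^sub>0_def by (simp add: sum_subtractf[symmetric] sum_negf[symmetric] algebra_simps)
    thus ?thesis
      using convex_argmin_sum_squares_variational_ineq[OF convex_K F(1) _ x\<^sub>0 _ that, of \<phi>]
        linear_D F argmin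
      by (force simp: g_def residual_def)
  qed
  hence "Sup (d\<^sub>0 ` K) = d\<^sub>0 x\<^sub>0" by (intro cSup_eq_maximum) (use x\<^sub>0 in auto)
  hence "\<phi> d\<^sub>0 \<le> d\<^sub>0 x\<^sub>0" using \<phi>_le_Sup[OF d\<^sub>0_in_D] by simp
  moreover have "\<phi> d\<^sub>0 = (\<Sum>d\<in>F. (- residual x\<^sub>0 d) * \<phi> d)"
    unfolding d\<^sub>0_def by (rule \<phi>_lincomb[OF F])
  hence "\<phi> d\<^sub>0 - d\<^sub>0 x\<^sub>0 = g x\<^sub>0"
    unfolding d\<^sub>0_def g_def residual_def
    by (simp add: sum_subtractf[symmetric] power2_eq_square algebra_simps)
  moreover have "0 \<le> g x\<^sub>0" unfolding g_def by (simp add: sum_nonneg)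
  ultimately have "(\<Sum>d\<in>F. (residual x\<^sub>0 d)\<^sup>2) = 0" unfolding g_def by linarith
  hence "\<forall>d\<in>F. d x\<^sub>0 = \<phi> d" by (simp add: sum_nonneg_eq_0_iff[OF F(1)] residual_def)
  with x\<^sub>0 show ?thesis by blast
qed

lemma solution: "\<exists>x\<in>K. \<forall>d\<in>D. d x = \<phi> d"
proof -
  define S where "S d = {x \<in> topspace T. d x \<in> {\<phi> d}}" for d
  have closed_S: "\<forall>C\<in>S ` D. closedin T C"
    unfolding S_def using closedin_continuous_map_preimage[OF continuous_D, of _ "{\<phi> _}"] by auto
  have "K \<inter> \<Inter>\<F> \<noteq> {}" if \<F>: "finite \<F>" "\<F> \<subseteq> S ` D" for \<F>
  proof -
    obtain G where G: "G \<subseteq> D" "finite G" "\<F> = S ` G"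
      using finite_subset_image[OF \<F>] by auto
    then obtain x where "x \<in> K" "\<forall>d\<in>G. d x = \<phi> d" using finite_solution by blast
    thus ?thesis using G compactin_subset_topspace[OF compactin_K] by (auto simp: S_def)
  qed
  hence "K \<inter> \<Inter>(S ` D) \<noteq> {}"
    using compactin_K closed_S unfolding compactin_fip by blast
  thus ?thesis by (auto simp: S_def)
qed

end

lemma dual_space_lincomb:
  assumes "finite G" "G \<subseteq> dual_space p"
  shows "(\<lambda>x. \<Sum>d\<in>G. l d * d x) \<in> dual_space p"
proof -
  have linear_G: "linear d" if "d \<in> G" for d
    using assms that by (auto simp: dual_space_def)
  have "linear (\<lambda>x. \<Sum>d\<in>G. l d * d x)"
  proof (rule linearI)
    fix x y show "(\<Sum>d\<in>G. l d * d (x + y)) = (\<Sum>d\<in>G. l d * d x) + (\<Sum>d\<in>G. l d * d y)"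
      using linear_G by (simp add: linear_add distrib_left sum.distrib)
  next
    fix r x show "(\<Sum>d\<in>G. l d * d (r *\<^sub>R x)) = r *\<^sub>R (\<Sum>d\<in>G. l d * d x)"
      using linear_G by (simp add: linear_scale sum_distrib_left mult.left_commute)
  qed
  moreover have "continuous_map (frechet_topology p) euclideanreal (\<lambda>x. \<Sum>d\<in>G. l d * d x)"
    using assms by (intro continuous_map_sum continuous_map_real_mult_left) (auto simp: dual_space_def)
  ultimately show ?thesis by (simp add: dual_space_def)
qed

lemma dual_space_uminus: "d \<in> dual_space p \<Longrightarrow> (\<lambda>x. - d x) \<in> dual_space p"
  using dual_space_lincomb[of "{d}" p "\<lambda>_. -1"] by simp

lemma support_fun_upper:
  assumes "d \<in> dual_space p" "C \<in> ck p" "y \<in> C"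
  shows "d y \<le> support_fun d C"
proof -
  have "compact (d ` C)"
    using assms image_compactin[of "frechet_topology p" C euclideanreal d]
    by (simp add: ck_def dual_space_def)
  hence "bdd_above (d ` C)" by (simp add: bounded_imp_bdd_above compact_imp_bounded)
  thus ?thesis unfolding support_fun_def using assms(3) by (simp add: cSUP_upper)
qed

lemma selection_AE_in_ck:
  assumes "\<forall>t\<in>{0..1}. \<Gamma> t \<in> ck p" "is_selection \<Gamma> f"
  shows "AE t in lebesgue_on {0..1}. f t \<in> \<Gamma> t \<and> \<Gamma> t \<in> ck p"
  using AE_space assms(2)[unfolded is_selection_def]
  by eventually_elim (use assms(1) in auto)

lemma selection_scalarly_integrable:
  assumes ck: "\<forall>t\<in>{0..1}. \<Gamma> t \<in> ck p" and "pettis_integrable_ck p \<Gamma>"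
    and sel: "is_selection \<Gamma> f" and "scalarly_measurable p f"
    and d: "d \<in> dual_space p"
  shows "integrable (lebesgue_on {0..1}) (\<lambda>t. d (f t))"
proof (rule Bochner_Integration.integrable_bound)
  let ?h = "\<lambda>t. \<bar>support_fun d (\<Gamma> t)\<bar> + \<bar>support_fun (\<lambda>x. - d x) (\<Gamma> t)\<bar>"
  have "integrable (lebesgue_on {0..1}) (\<lambda>t. support_fun e (\<Gamma> t))" if "e \<in> dual_space p" for e
    using assms(2) that by (simp add: pettis_integrable_ck_def)
  then show "integrable (lebesgue_on {0..1}) ?h"
    using d dual_space_uminus[OF d]
    by (auto intro!: Bochner_Integration.integrable_add Bochner_Integration.integrable_abs)
  show "(\<lambda>t. d (f t)) \<in> borel_measurable (lebesgue_on {0..1})"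
    using assms by (simp add: scalarly_measurable_def)
  show "AE t in lebesgue_on {0..1}. norm (d (f t)) \<le> norm (?h t)"
    using selection_AE_in_ck[OF ck sel]
    by eventually_elim (use support_fun_upper[OF d] support_fun_upper[OF dual_space_uminus[OF d]] in force)
qed

lemma selection_set_integral_le_support:
  assumes ck: "\<forall>t\<in>{0..1}. \<Gamma> t \<in> ck p" and "pettis_integrable_ck p \<Gamma>"
    and sel: "is_selection \<Gamma> f" and "scalarly_measurable p f"
    and d: "d \<in> dual_space p" and E: "E \<in> sets (lebesgue_on {0..1})"
  shows "(LINT t:E|lebesgue_on {0..1}. d (f t)) \<le> (LINT t:E|lebesgue_on {0..1}. support_fun d (\<Gamma> t))"
  unfolding set_lebesgue_integral_def
proof (rule integral_mono_AE)
  show "integrable (lebesgue_on {0..1}) (\<lambda>t. indicator E t *\<^sub>R d (f t))"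
    using integrable_mult_indicator[OF E selection_scalarly_integrable[OF assms(1-5)]] by simp
  show "integrable (lebesgue_on {0..1}) (\<lambda>t. indicator E t *\<^sub>R support_fun d (\<Gamma> t))"
    using integrable_mult_indicator[OF E, of "\<lambda>t. support_fun d (\<Gamma> t)"] assms(2) d
    by (simp add: pettis_integrable_ck_def)
  show "AE t in lebesgue_on {0..1}. indicator E t *\<^sub>R d (f t) \<le> indicator E t *\<^sub>R support_fun d (\<Gamma> t)"
    using selection_AE_in_ck[OF ck sel]
    by eventually_elim (use support_fun_upper[OF d] in \<open>auto simp: indicator_def\<close>)
qed

lemma set_integral_lincomb:
  fixes g :: "'i \<Rightarrow> real \<Rightarrow> real"
  assumes "finite G" "\<And>i. i \<in> G \<Longrightarrow> integrable M (g i)" "E \<in> sets M"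
  shows "(LINT t:E|M. \<Sum>i\<in>G. l i * g i t) = (\<Sum>i\<in>G. l i * (LINT t:E|M. g i t))"
proof -
  have "integrable M (\<lambda>t. indicator E t * g i t)" if "i \<in> G" for i
    using integrable_mult_indicator[OF assms(3) assms(2)[OF that]] by simp
  thus ?thesis
    using assms(1) unfolding set_lebesgue_integral_def
    by (simp add: sum_distrib_left mult.left_commute Bochner_Integration.integral_sum)
qed

lemma selection_moment_problem:
  assumes ck: "\<forall>t\<in>{0..1}. \<Gamma> t \<in> ck p" and "pettis_integrable_ck p \<Gamma>"
    and sel: "is_selection \<Gamma> f" and "scalarly_measurable p f"
    and E: "E \<in> sets (lebesgue_on {0..1})" and C: "C \<in> ck p"
    and C_integral: "\<forall>d\<in>dual_space p.
      support_fun d C = (LINT t:E|lebesgue_on {0..1}. support_fun d (\<Gamma> t))"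
  shows "dominated_moment_problem (frechet_topology p) C (dual_space p)
      (\<lambda>d. LINT t:E|lebesgue_on {0..1}. d (f t))"
proof (rule dominated_moment_problem.intro)
  show "compactin (frechet_topology p) C" "C \<noteq> {}" "convex C"
    using C by (auto simp: ck_def)
next
  fix d assume "d \<in> dual_space p"
  then show "linear d" by (simp add: dual_space_def)
next
  fix d assume "d \<in> dual_space p"
  then show "continuous_map (frechet_topology p) euclideanreal d" by (simp add: dual_space_def)
next
  fix l and G :: "('a \<Rightarrow> real) set" assume "finite G" "G \<subseteq> dual_space p"
  then show "(\<lambda>x. \<Sum>d\<in>G. l d * d x) \<in> dual_space p" by (rule dual_space_lincomb)
next
  fix l and G :: "('a \<Rightarrow> real) set" assume G: "finite G" "G \<subseteq> dual_space p"
  then show "(LINT t:E|lebesgue_on {0..1}. \<Sum>d\<in>G. l d * d (f t))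
      = (\<Sum>d\<in>G. l d * (LINT t:E|lebesgue_on {0..1}. d (f t)))"
    using G selection_scalarly_integrable[OF assms(1-4)] E by (intro set_integral_lincomb) auto
next
  fix d assume d: "d \<in> dual_space p"
  have "(LINT t:E|lebesgue_on {0..1}. d (f t)) \<le> support_fun d C"
    using selection_set_integral_le_support[OF assms(1-4) d E] C_integral d by simp
  then show "(LINT t:E|lebesgue_on {0..1}. d (f t)) \<le> Sup (d ` C)"
    by (simp add: support_fun_def)
qed

theorem corollary4p8:
  fixes p :: "nat \<Rightarrow> 'a::real_vector \<Rightarrow> real"
    and \<Gamma> :: "real \<Rightarrow> 'a set"
    and f :: "real \<Rightarrow> 'a"
  assumes "frechet_seminorms p"
    and "\<forall>t\<in>{0..1}. \<Gamma> t \<in> ck p"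
    and "pettis_integrable_ck p \<Gamma>"
    and "is_selection \<Gamma> f"
    and "scalarly_measurable p f"
  shows "pettis_integrable p f"
  unfolding pettis_integrable_def
proof (intro conjI ballI)
  fix d assume "d \<in> dual_space p"
  thus "integrable (lebesgue_on {0..1}) (\<lambda>t. d (f t))"
    using selection_scalarly_integrable assms(2-5) by blast
next
  fix E assume E: "E \<in> sets (lebesgue_on {0..1::real})"
  then obtain C where C: "C \<in> ck p" and C_integral: "\<forall>d\<in>dual_space p.
      support_fun d C = (LINT t:E|lebesgue_on {0..1}. support_fun d (\<Gamma> t))"
    using assms(3) by (auto simp: pettis_integrable_ck_def)
  then interpret dominated_moment_problem "frechet_topology p" C "dual_space p"
      "\<lambda>d. LINT t:E|lebesgue_on {0..1}. d (f t)"
    using selection_moment_problem[OF assms(2-5) E] by blast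
  show "\<exists>x. \<forall>d\<in>dual_space p. d x = (LINT t:E|lebesgue_on {0..1}. d (f t))"
    using solution by blast
qed

end
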